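(* Let $\mathcal L$ be a summable category with finite products strictly preserved by $S$. For objects $X_0,X_1$ put $\psi^0_{X_0,X_1}=SX_0\,\&\,\iota_{0,X_1}\in\mathcal L(SX_0\& X_1,S(X_0\& X_1))$ and $\psi^1_{X_0,X_1}=\iota_{0,X_0}\,\&\,SX_1\in\mathcal L(X_0\& SX_1,S(X_0\& X_1))$. Then, as morphisms $SX_0\& SX_1\to S^2(X_0\& X_1)$ in $\mathcal L$, $$c_{X_0\&X_1}\circ S(\psi^0_{X_0,X_1})\circ\psi^1_{SX_0,X_1}=S(\psi^1_{X_0,X_1})\circ\psi^0_{X_0,SX_1}.$$
   Context: $\mathcal L$ is a category with zero morphisms equipped with a summability structure: a functor $S$ and natural transformations $\pi_0,\pi_1,\sigma:S\Rightarrow\mathrm{Id}$, $\pi_0,\pi_1$ jointly monic, satisfying the axioms of summable categories of Ehrhard's coherent differentiation; $f_0,f_1\in\mathcal L(X,Y)$ are summable if there is (a necessarily unique) $\langle f_0,f_1\rangle\in\mathcal L(X,SY)$ with $\pi_i\circ\langle f_0,f_1\rangle=f_i$, and then $f_0+f_1=\sigma\circ\langle f_0,f_1\rangle$. Homsets are partial commutative monoids for this sum with neutral element $0$ and composition distributes over defined sums. $\iota_0=\langle\mathrm{id},0\rangle:\mathrm{Id}\Rightarrow S$, and the flip $c:S^2\Rightarrow S^2$ is the natural transformation characterised by $\pi_i\circ\pi_j\circ c=\pi_j\circ\pi_i$ ($i,j\in\{0,1\}$). $\mathcal L$ has finite cartesian products $X_0\& X_1$ with projections $p_0,p_1$, and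 $S$ preserves them strictly: $S(X_0\&X_1)=SX_0\& SX_1$ and $S p_i=p_i$. For morphisms $f_i$, $f_0\& f_1$ is the product of morphisms; an object written in place of a morphism denotes its identity. *)

theory Defs
  imports Main
begin

record ('o, 'm) scat =
  hom  :: "'o \<Rightarrow> 'o \<Rightarrow> 'm set"
  comp :: "'m \<Rightarrow> 'm \<Rightarrow> 'm"      (* comp g f = g o f *)
  idm  :: "'o \<Rightarrow> 'm"
  zero :: "'o \<Rightarrow> 'o \<Rightarrow> 'm"
  Sob  :: "'o \<Rightarrow> 'o"
  Smor :: "'m \<Rightarrow> 'm"
  pi0  :: "'o \<Rightarrow> 'm"
  pi1  :: "'o \<Rightarrow> 'm"
  sig  :: "'o \<Rightarrow> 'm"
  prd  :: "'o \<Rightarrow> 'o \<Rightarrow> 'o"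
  pr0  :: "'o \<Rightarrow> 'o \<Rightarrow> 'm"
  pr1  :: "'o \<Rightarrow> 'o \<Rightarrow> 'm"
  term_ob :: "'o"

definition summable :: "('o,'m) scat \<Rightarrow> 'o \<Rightarrow> 'o \<Rightarrow> 'm \<Rightarrow> 'm \<Rightarrow> bool" where
  "summable L X Y f0 f1 \<longleftrightarrow> f0 \<in> hom L X Y \<and> f1 \<in> hom L X Y \<and>
     (\<exists>w \<in> hom L X (Sob L Y). comp L (pi0 L Y) w = f0 \<and> comp L (pi1 L Y) w = f1)"

definition witness :: "('o,'m) scat \<Rightarrow> 'o \<Rightarrow> 'o \<Rightarrow> 'm \<Rightarrow> 'm \<Rightarrow> 'm" where
  "witness L X Y f0 f1 = (THE w. w \<in> hom L X (Sob L Y) \<and>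
      comp L (pi0 L Y) w = f0 \<and> comp L (pi1 L Y) w = f1)"

definition ssum :: "('o,'m) scat \<Rightarrow> 'o \<Rightarrow> 'o \<Rightarrow> 'm \<Rightarrow> 'm \<Rightarrow> 'm" where
  "ssum L X Y f0 f1 = comp L (sig L Y) (witness L X Y f0 f1)"

definition iota0 :: "('o,'m) scat \<Rightarrow> 'o \<Rightarrow> 'm" where
  "iota0 L X = witness L X X (idm L X) (zero L X X)"

definition flip :: "('o,'m) scat \<Rightarrow> 'o \<Rightarrow> 'm" where
  "flip L X = (THE h. h \<in> hom L (Sob L (Sob L X)) (Sob L (Sob L X)) \<and>
     (\<forall>p \<in> {pi0 L, pi1 L}. \<forall>q \<in> {pi0 L, pi1 L}.
        comp L (p X) (comp L (q (Sob L X)) h) = comp L (q X) (p (Sob L X))))"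

definition pairing :: "('o,'m) scat \<Rightarrow> 'o \<Rightarrow> 'o \<Rightarrow> 'o \<Rightarrow> 'm \<Rightarrow> 'm \<Rightarrow> 'm" where
  "pairing L Z X0 X1 f0 f1 = (THE h. h \<in> hom L Z (prd L X0 X1) \<and>
      comp L (pr0 L X0 X1) h = f0 \<and> comp L (pr1 L X0 X1) h = f1)"

definition pmor :: "('o,'m) scat \<Rightarrow> 'o \<Rightarrow> 'o \<Rightarrow> 'o \<Rightarrow> 'o \<Rightarrow> 'm \<Rightarrow> 'm \<Rightarrow> 'm" where
  "pmor L X0 X1 Y0 Y1 f0 f1 = pairing L (prd L X0 X1) Y0 Y1
      (comp L f0 (pr0 L X0 X1)) (comp L f1 (pr1 L X0 X1))"

definition psi0 :: "('o,'m) scat \<Rightarrow> 'o \<Rightarrow> 'o \<Rightarrow> 'm" where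
  "psi0 L X0 X1 = pmor L (Sob L X0) X1 (Sob L X0) (Sob L X1) (idm L (Sob L X0)) (iota0 L X1)"

definition psi1 :: "('o,'m) scat \<Rightarrow> 'o \<Rightarrow> 'o \<Rightarrow> 'm" where
  "psi1 L X0 X1 = pmor L X0 (Sob L X1) (Sob L X0) (Sob L X1) (iota0 L X0) (idm L (Sob L X1))"

locale category =
  fixes L :: "('o,'m) scat"
  assumes comp_hom: "f \<in> hom L X Y \<Longrightarrow> g \<in> hom L Y Z \<Longrightarrow> comp L g f \<in> hom L X Z"
    and comp_assoc: "f \<in> hom L X Y \<Longrightarrow> g \<in> hom L Y Z \<Longrightarrow> h \<in> hom L Z W \<Longrightarrow>
          comp L h (comp L g f) = comp L (comp L h g) f"
    and id_hom: "idm L X \<in> hom L X X"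
    and id_left: "f \<in> hom L X Y \<Longrightarrow> comp L (idm L Y) f = f"
    and id_right: "f \<in> hom L X Y \<Longrightarrow> comp L f (idm L X) = f"
    and hom_disjoint: "f \<in> hom L X Y \<Longrightarrow> f \<in> hom L X' Y' \<Longrightarrow> X = X' \<and> Y = Y'"

locale presummable_category = category +
  assumes zero_hom: "zero L X Y \<in> hom L X Y"
    and zero_left: "f \<in> hom L Y Z \<Longrightarrow> comp L f (zero L X Y) = zero L X Z"
    and zero_right: "g \<in> hom L W X \<Longrightarrow> comp L (zero L X Y) g = zero L W Y"
    and S_hom: "f \<in> hom L X Y \<Longrightarrow> Smor L f \<in> hom L (Sob L X) (Sob L Y)"
    and S_id: "Smor L (idm L X) = idm L (Sob L X)"
    and S_comp: "f \<in> hom L X Y \<Longrightarrow> g \<in> hom L Y Z \<Longrightarrow>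
          Smor L (comp L g f) = comp L (Smor L g) (Smor L f)"
    and pi0_hom: "pi0 L X \<in> hom L (Sob L X) X"
    and pi1_hom: "pi1 L X \<in> hom L (Sob L X) X"
    and sig_hom: "sig L X \<in> hom L (Sob L X) X"
    and pi0_nat: "f \<in> hom L X Y \<Longrightarrow> comp L (pi0 L Y) (Smor L f) = comp L f (pi0 L X)"
    and pi1_nat: "f \<in> hom L X Y \<Longrightarrow> comp L (pi1 L Y) (Smor L f) = comp L f (pi1 L X)"
    and sig_nat: "f \<in> hom L X Y \<Longrightarrow> comp L (sig L Y) (Smor L f) = comp L f (sig L X)"
    and pi_jointly_monic: "f \<in> hom L Z (Sob L X) \<Longrightarrow> g \<in> hom L Z (Sob L X) \<Longrightarrow>
          comp L (pi0 L X) f = comp L (pi0 L X) g \<Longrightarrow> comp L (pi1 L X) f = comp L (pi1 L X) g \<Longrightarrow> f = g"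

locale summable_category = presummable_category +
  assumes S_zero: "f \<in> hom L X Y \<Longrightarrow>
          summable L X Y f (zero L X Y) \<and> ssum L X Y f (zero L X Y) = f"
    and S_com: "summable L X Y f0 f1 \<Longrightarrow>
          summable L X Y f1 f0 \<and> ssum L X Y f0 f1 = ssum L X Y f1 f0"
    and S_assoc: "summable L X Y f0 f1 \<Longrightarrow> summable L X Y (ssum L X Y f0 f1) f2 \<Longrightarrow>
          summable L X Y f1 f2 \<and> summable L X Y f0 (ssum L X Y f1 f2) \<and>
          ssum L X Y (ssum L X Y f0 f1) f2 = ssum L X Y f0 (ssum L X Y f1 f2)"
    and S_witness: "f0 \<in> hom L X (Sob L Y) \<Longrightarrow> f1 \<in> hom L X (Sob L Y) \<Longrightarrow>
          summable L X Y (comp L (pi0 L Y) f0) (comp L (pi0 L Y) f1) \<Longrightarrow>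
          summable L X Y (comp L (pi1 L Y) f0) (comp L (pi1 L Y) f1) \<Longrightarrow>
          summable L X Y (ssum L X Y (comp L (pi0 L Y) f0) (comp L (pi0 L Y) f1))
                         (ssum L X Y (comp L (pi1 L Y) f0) (comp L (pi1 L Y) f1)) \<Longrightarrow>
          summable L X (Sob L Y) f0 f1"

locale summable_category_products = summable_category +
  assumes pr0_hom: "pr0 L X0 X1 \<in> hom L (prd L X0 X1) X0"
    and pr1_hom: "pr1 L X0 X1 \<in> hom L (prd L X0 X1) X1"
    and prod_universal: "f0 \<in> hom L Z X0 \<Longrightarrow> f1 \<in> hom L Z X1 \<Longrightarrow>
          \<exists>!h. h \<in> hom L Z (prd L X0 X1) \<and> comp L (pr0 L X0 X1) h = f0 \<and> comp L (pr1 L X0 X1) h = f1"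
    and terminal: "\<exists>!h. h \<in> hom L Z (term_ob L)"
    and S_prd: "Sob L (prd L X0 X1) = prd L (Sob L X0) (Sob L X1)"
    and S_pr0: "Smor L (pr0 L X0 X1) = pr0 L (Sob L X0) (Sob L X1)"
    and S_pr1: "Smor L (pr1 L X0 X1) = pr1 L (Sob L X0) (Sob L X1)"
    and S_term: "Sob L (term_ob L) = term_ob L"

end

theory Submission
  imports Defs
begin

text \<open>Both sides are products of morphisms. Strict preservation of products gives
  \<open>S(f\<^sub>0 & f\<^sub>1) = Sf\<^sub>0 & Sf\<^sub>1\<close>, and naturality of the flip, applied to the projections
  (which \<open>S\<^sup>2\<close> fixes), gives \<open>c\<^bsub>X\<^sub>0&X\<^sub>1\<^esub> = c\<^bsub>X\<^sub>0\<^esub> & c\<^bsub>X\<^sub>1\<^esub>\<close>. Composing componentwise,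
  both sides reduce to \<open>S\<iota>\<^bsub>0,X\<^sub>0\<^esub> & \<iota>\<^bsub>0,SX\<^sub>1\<^esub>\<close> because \<open>c \<circ> \<iota>\<^sub>0S = S\<iota>\<^sub>0\<close> and
  \<open>c \<circ> S\<iota>\<^sub>0 = \<iota>\<^sub>0S\<close>. These two identities, like naturality of \<open>c\<close>, are checked
  against the jointly monic projections once \<open>c\<close> is identified with \<open>\<langle>S\<pi>\<^sub>0, S\<pi>\<^sub>1\<rangle>\<close>;
  that this pair is summable is precisely the content of the axiom \<open>S_witness\<close>.\<close>

context presummable_category
begin

lemma pi_hom: "q \<in> {pi0 L, pi1 L} \<Longrightarrow> q X \<in> hom L (Sob L X) X"
  using pi0_hom pi1_hom by blast

lemma pi_nat: "q \<in> {pi0 L, pi1 L} \<Longrightarrow> f \<in> hom L X Y \<Longrightarrow>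
    comp L (q Y) (Smor L f) = comp L f (q X)"
  using pi0_nat pi1_nat by blast

lemma pi_ext:
  assumes "f \<in> hom L Z (Sob L X)" and "g \<in> hom L Z (Sob L X)"
    and "\<And>q. q \<in> {pi0 L, pi1 L} \<Longrightarrow> comp L (q X) f = comp L (q X) g"
  shows "f = g"
  using pi_jointly_monic assms by blast

lemma witness_unique:
  assumes "w \<in> hom L X (Sob L Y)" and "comp L (pi0 L Y) w = f0" and "comp L (pi1 L Y) w = f1"
  shows "witness L X Y f0 f1 = w"
  unfolding witness_def using assms pi_jointly_monic by auto

lemma
  assumes "summable L X Y f0 f1"
  shows witness_hom: "witness L X Y f0 f1 \<in> hom L X (Sob L Y)"
    and pi0_witness: "comp L (pi0 L Y) (witness L X Y f0 f1) = f0"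
    and pi1_witness: "comp L (pi1 L Y) (witness L X Y f0 f1) = f1"
  using assms witness_unique unfolding summable_def by metis+

lemma summable_components:
  "g \<in> hom L X (Sob L Y) \<Longrightarrow> summable L X Y (comp L (pi0 L Y) g) (comp L (pi1 L Y) g)"
  using comp_hom pi0_hom pi1_hom unfolding summable_def by blast

lemma ssum_components:
  "g \<in> hom L X (Sob L Y) \<Longrightarrow> ssum L X Y (comp L (pi0 L Y) g) (comp L (pi1 L Y) g) = comp L (sig L Y) g"
  unfolding ssum_def by (simp add: witness_unique)

lemma Smor_zero: "Smor L (zero L X Y) = zero L (Sob L X) (Sob L Y)"
  by (rule pi_jointly_monic[where Z = "Sob L X" and X = Y])
    (simp_all add: pi0_nat[OF zero_hom] pi1_nat[OF zero_hom] zero_left[OF pi0_hom] zero_left[OF pi1_hom]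
      zero_right[OF pi0_hom] zero_right[OF pi1_hom] zero_hom S_hom)

end

context summable_category
begin

lemma
  shows iota0_hom: "iota0 L X \<in> hom L X (Sob L X)"
    and pi0_iota0: "comp L (pi0 L X) (iota0 L X) = idm L X"
    and pi1_iota0: "comp L (pi1 L X) (iota0 L X) = zero L X X"
  unfolding iota0_def using S_zero[OF id_hom] witness_hom pi0_witness pi1_witness by blast+

lemma iota0_nat:
  assumes f: "f \<in> hom L X Y"
  shows "comp L (Smor L f) (iota0 L X) = comp L (iota0 L Y) f"
proof (rule pi_jointly_monic)
  have "comp L (pi0 L Y) (comp L (Smor L f) (iota0 L X)) = comp L (comp L f (pi0 L X)) (iota0 L X)"
    using comp_assoc[OF iota0_hom S_hom[OF f] pi0_hom] pi0_nat[OF f] by simp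
  also have "\<dots> = comp L (pi0 L Y) (comp L (iota0 L Y) f)"
    using comp_assoc[OF iota0_hom pi0_hom f] comp_assoc[OF f iota0_hom pi0_hom]
    by (simp add: pi0_iota0 id_left[OF f] id_right[OF f])
  finally show "comp L (pi0 L Y) (comp L (Smor L f) (iota0 L X)) = comp L (pi0 L Y) (comp L (iota0 L Y) f)" .
  have "comp L (pi1 L Y) (comp L (Smor L f) (iota0 L X)) = comp L (comp L f (pi1 L X)) (iota0 L X)"
    using comp_assoc[OF iota0_hom S_hom[OF f] pi1_hom] pi1_nat[OF f] by simp
  also have "\<dots> = comp L (pi1 L Y) (comp L (iota0 L Y) f)"
    using comp_assoc[OF iota0_hom pi1_hom f] comp_assoc[OF f iota0_hom pi1_hom]
    by (simp add: pi1_iota0 zero_left[OF f] zero_right[OF f])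
  finally show "comp L (pi1 L Y) (comp L (Smor L f) (iota0 L X)) = comp L (pi1 L Y) (comp L (iota0 L Y) f)" .
qed (use f in \<open>blast intro: comp_hom S_hom iota0_hom\<close>)+

lemma summable_Smor_pi:
  "summable L (Sob L (Sob L X)) (Sob L X) (Smor L (pi0 L X)) (Smor L (pi1 L X))"
proof (rule S_witness)
  show "Smor L (pi0 L X) \<in> hom L (Sob L (Sob L X)) (Sob L X)"
    and "Smor L (pi1 L X) \<in> hom L (Sob L (Sob L X)) (Sob L X)"
    by (simp_all add: S_hom pi0_hom pi1_hom)
  show "summable L (Sob L (Sob L X)) X (comp L (pi0 L X) (Smor L (pi0 L X))) (comp L (pi0 L X) (Smor L (pi1 L X)))"
    using summable_components[OF pi0_hom] by (simp add: pi0_nat[OF pi0_hom] pi0_nat[OF pi1_hom])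
  show "summable L (Sob L (Sob L X)) X (comp L (pi1 L X) (Smor L (pi0 L X))) (comp L (pi1 L X) (Smor L (pi1 L X)))"
    using summable_components[OF pi1_hom] by (simp add: pi1_nat[OF pi0_hom] pi1_nat[OF pi1_hom])
  show "summable L (Sob L (Sob L X)) X
     (ssum L (Sob L (Sob L X)) X (comp L (pi0 L X) (Smor L (pi0 L X))) (comp L (pi0 L X) (Smor L (pi1 L X))))
     (ssum L (Sob L (Sob L X)) X (comp L (pi1 L X) (Smor L (pi0 L X))) (comp L (pi1 L X) (Smor L (pi1 L X))))"
    using summable_components[OF S_hom[OF sig_hom]]
    by (simp add: pi0_nat[OF pi0_hom] pi0_nat[OF pi1_hom] pi1_nat[OF pi0_hom] pi1_nat[OF pi1_hom]
        pi0_nat[OF sig_hom] pi1_nat[OF sig_hom] ssum_components[OF pi0_hom] ssum_components[OF pi1_hom])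
qed

lemma eq_Smor_pi_iff:
  assumes "h \<in> hom L (Sob L (Sob L X)) (Sob L X)" and "q \<in> {pi0 L, pi1 L}"
  shows "h = Smor L (q X) \<longleftrightarrow> (\<forall>p \<in> {pi0 L, pi1 L}. comp L (p X) h = comp L (q X) (p (Sob L X)))"
  using assms pi_ext[OF assms(1) S_hom[OF pi_hom]] pi_nat[OF _ pi_hom[OF assms(2)]] by metis

lemma flip_eq_witness:
  "flip L X = witness L (Sob L (Sob L X)) (Sob L X) (Smor L (pi0 L X)) (Smor L (pi1 L X))"
  (is "_ = ?w")
proof -
  have char: "(\<forall>p \<in> {pi0 L, pi1 L}. \<forall>q \<in> {pi0 L, pi1 L}.
       comp L (p X) (comp L (q (Sob L X)) h) = comp L (q X) (p (Sob L X)))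
     \<longleftrightarrow> comp L (pi0 L (Sob L X)) h = Smor L (pi0 L X) \<and> comp L (pi1 L (Sob L X)) h = Smor L (pi1 L X)"
    if "h \<in> hom L (Sob L (Sob L X)) (Sob L (Sob L X))" for h
    using eq_Smor_pi_iff[OF comp_hom[OF that pi_hom]] by blast
  show ?thesis
    unfolding flip_def
  proof (rule the_equality)
    show "?w \<in> hom L (Sob L (Sob L X)) (Sob L (Sob L X)) \<and> (\<forall>p \<in> {pi0 L, pi1 L}. \<forall>q \<in> {pi0 L, pi1 L}.
       comp L (p X) (comp L (q (Sob L X)) ?w) = comp L (q X) (p (Sob L X)))"
      using char summable_Smor_pi witness_hom pi0_witness pi1_witness by metis
  qed (use char witness_unique in blast)
qed

lemma flip_hom: "flip L X \<in> hom L (Sob L (Sob L X)) (Sob L (Sob L X))"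
  unfolding flip_eq_witness by (rule witness_hom[OF summable_Smor_pi])

lemma pi_flip: "q \<in> {pi0 L, pi1 L} \<Longrightarrow> comp L (q (Sob L X)) (flip L X) = Smor L (q X)"
  unfolding flip_eq_witness using pi0_witness[OF summable_Smor_pi] pi1_witness[OF summable_Smor_pi] by blast

lemma flip_nat:
  assumes f: "f \<in> hom L X Y"
  shows "comp L (Smor L (Smor L f)) (flip L X) = comp L (flip L Y) (Smor L (Smor L f))"
proof (rule pi_ext[where X = "Sob L Y"])
  have Sf: "Smor L f \<in> hom L (Sob L X) (Sob L Y)"
    and SSf: "Smor L (Smor L f) \<in> hom L (Sob L (Sob L X)) (Sob L (Sob L Y))"
    using f by (simp_all add: S_hom)
  show "comp L (Smor L (Smor L f)) (flip L X) \<in> hom L (Sob L (Sob L X)) (Sob L (Sob L Y))"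
    and "comp L (flip L Y) (Smor L (Smor L f)) \<in> hom L (Sob L (Sob L X)) (Sob L (Sob L Y))"
    using comp_hom[OF flip_hom SSf] comp_hom[OF SSf flip_hom] .
  fix q assume q: "q \<in> {pi0 L, pi1 L}"
  have "comp L (q (Sob L Y)) (comp L (Smor L (Smor L f)) (flip L X))
      = comp L (Smor L f) (comp L (q (Sob L X)) (flip L X))"
    using comp_assoc[OF flip_hom SSf pi_hom[OF q]] comp_assoc[OF flip_hom pi_hom[OF q] Sf] pi_nat[OF q Sf] by simp
  also have "\<dots> = Smor L (comp L f (q X))"
    using S_comp[OF pi_hom[OF q] f] pi_flip[OF q] by simp
  also have "\<dots> = comp L (comp L (q (Sob L Y)) (flip L Y)) (Smor L (Smor L f))"
    using S_comp[OF Sf pi_hom[OF q]] pi_nat[OF q f] pi_flip[OF q] by simp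
  also have "\<dots> = comp L (q (Sob L Y)) (comp L (flip L Y) (Smor L (Smor L f)))"
    using comp_assoc[OF SSf flip_hom pi_hom[OF q]] by simp
  finally show "comp L (q (Sob L Y)) (comp L (Smor L (Smor L f)) (flip L X))
      = comp L (q (Sob L Y)) (comp L (flip L Y) (Smor L (Smor L f)))" .
qed

lemma flip_iota0: "comp L (flip L X) (iota0 L (Sob L X)) = Smor L (iota0 L X)"
proof (rule pi_ext[where X = "Sob L X"])
  show "comp L (flip L X) (iota0 L (Sob L X)) \<in> hom L (Sob L X) (Sob L (Sob L X))"
    and "Smor L (iota0 L X) \<in> hom L (Sob L X) (Sob L (Sob L X))"
    using comp_hom[OF iota0_hom flip_hom] S_hom[OF iota0_hom] .
  fix q assume q: "q \<in> {pi0 L, pi1 L}"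
  have "comp L (q (Sob L X)) (comp L (flip L X) (iota0 L (Sob L X)))
      = comp L (Smor L (q X)) (iota0 L (Sob L X))"
    using comp_assoc[OF iota0_hom flip_hom pi_hom[OF q]] pi_flip[OF q] by simp
  also have "\<dots> = comp L (q (Sob L X)) (Smor L (iota0 L X))"
    using iota0_nat[OF pi_hom[OF q]] pi_nat[OF q iota0_hom] by simp
  finally show "comp L (q (Sob L X)) (comp L (flip L X) (iota0 L (Sob L X)))
      = comp L (q (Sob L X)) (Smor L (iota0 L X))" .
qed

lemma flip_Smor_iota0: "comp L (flip L X) (Smor L (iota0 L X)) = iota0 L (Sob L X)"
proof -
  have Si: "Smor L (iota0 L X) \<in> hom L (Sob L X) (Sob L (Sob L X))"
    by (rule S_hom[OF iota0_hom])
  have "comp L (q (Sob L X)) (comp L (flip L X) (Smor L (iota0 L X))) = Smor L (comp L (q X) (iota0 L X))"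
    if q: "q \<in> {pi0 L, pi1 L}" for q
    using comp_assoc[OF Si flip_hom pi_hom[OF q]] pi_flip[OF q] S_comp[OF iota0_hom pi_hom[OF q]] by simp
  then show ?thesis
    by (intro pi_jointly_monic[OF comp_hom[OF Si flip_hom] iota0_hom])
      (simp_all add: pi0_iota0 pi1_iota0 S_id Smor_zero)
qed

end

context summable_category_products
begin

lemma prod_ext:
  assumes "h \<in> hom L Z (prd L X0 X1)" and "h' \<in> hom L Z (prd L X0 X1)"
    and "comp L (pr0 L X0 X1) h = comp L (pr0 L X0 X1) h'"
    and "comp L (pr1 L X0 X1) h = comp L (pr1 L X0 X1) h'"
  shows "h = h'"
  using prod_universal[OF comp_hom[OF assms(1) pr0_hom] comp_hom[OF assms(1) pr1_hom]] assms
  by (metis (no_types, lifting))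

lemma
  assumes "f0 \<in> hom L X0 Y0" and "f1 \<in> hom L X1 Y1"
  shows pmor_hom: "pmor L X0 X1 Y0 Y1 f0 f1 \<in> hom L (prd L X0 X1) (prd L Y0 Y1)"
    and pr0_pmor: "comp L (pr0 L Y0 Y1) (pmor L X0 X1 Y0 Y1 f0 f1) = comp L f0 (pr0 L X0 X1)"
    and pr1_pmor: "comp L (pr1 L Y0 Y1) (pmor L X0 X1 Y0 Y1 f0 f1) = comp L f1 (pr1 L X0 X1)"
  using theI'[OF prod_universal[OF comp_hom[OF pr0_hom assms(1)] comp_hom[OF pr1_hom assms(2)]]]
  unfolding pmor_def pairing_def by simp_all

lemma pmor_comp:
  assumes f0: "f0 \<in> hom L X0 Y0" and f1: "f1 \<in> hom L X1 Y1"
    and g0: "g0 \<in> hom L Y0 Z0" and g1: "g1 \<in> hom L Y1 Z1"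
  shows "comp L (pmor L Y0 Y1 Z0 Z1 g0 g1) (pmor L X0 X1 Y0 Y1 f0 f1)
    = pmor L X0 X1 Z0 Z1 (comp L g0 f0) (comp L g1 f1)"
proof (rule prod_ext)
  note F = pmor_hom[OF f0 f1] and G = pmor_hom[OF g0 g1]
  show "comp L (pmor L Y0 Y1 Z0 Z1 g0 g1) (pmor L X0 X1 Y0 Y1 f0 f1) \<in> hom L (prd L X0 X1) (prd L Z0 Z1)"
    and "pmor L X0 X1 Z0 Z1 (comp L g0 f0) (comp L g1 f1) \<in> hom L (prd L X0 X1) (prd L Z0 Z1)"
    using comp_hom[OF F G] pmor_hom[OF comp_hom[OF f0 g0] comp_hom[OF f1 g1]] .
  show "comp L (pr0 L Z0 Z1) (comp L (pmor L Y0 Y1 Z0 Z1 g0 g1) (pmor L X0 X1 Y0 Y1 f0 f1))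
    = comp L (pr0 L Z0 Z1) (pmor L X0 X1 Z0 Z1 (comp L g0 f0) (comp L g1 f1))"
    by (metis comp_assoc[OF F G pr0_hom] comp_assoc[OF F pr0_hom g0] comp_assoc[OF pr0_hom f0 g0]
        pr0_pmor[OF f0 f1] pr0_pmor[OF g0 g1] pr0_pmor[OF comp_hom[OF f0 g0] comp_hom[OF f1 g1]])
  show "comp L (pr1 L Z0 Z1) (comp L (pmor L Y0 Y1 Z0 Z1 g0 g1) (pmor L X0 X1 Y0 Y1 f0 f1))
    = comp L (pr1 L Z0 Z1) (pmor L X0 X1 Z0 Z1 (comp L g0 f0) (comp L g1 f1))"
    by (metis comp_assoc[OF F G pr1_hom] comp_assoc[OF F pr1_hom g1] comp_assoc[OF pr1_hom f1 g1]
        pr1_pmor[OF f0 f1] pr1_pmor[OF g0 g1] pr1_pmor[OF comp_hom[OF f0 g0] comp_hom[OF f1 g1]])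
qed

lemma Smor_pmor:
  assumes f0: "f0 \<in> hom L X0 Y0" and f1: "f1 \<in> hom L X1 Y1"
  shows "Smor L (pmor L X0 X1 Y0 Y1 f0 f1)
    = pmor L (Sob L X0) (Sob L X1) (Sob L Y0) (Sob L Y1) (Smor L f0) (Smor L f1)"
proof (rule prod_ext)
  note F = pmor_hom[OF f0 f1] and Sf0 = S_hom[OF f0] and Sf1 = S_hom[OF f1]
  show "Smor L (pmor L X0 X1 Y0 Y1 f0 f1) \<in> hom L (prd L (Sob L X0) (Sob L X1)) (prd L (Sob L Y0) (Sob L Y1))"
    using S_hom[OF F] by (simp add: S_prd)
  show "pmor L (Sob L X0) (Sob L X1) (Sob L Y0) (Sob L Y1) (Smor L f0) (Smor L f1)
    \<in> hom L (prd L (Sob L X0) (Sob L X1)) (prd L (Sob L Y0) (Sob L Y1))"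
    by (rule pmor_hom[OF Sf0 Sf1])
  show "comp L (pr0 L (Sob L Y0) (Sob L Y1)) (Smor L (pmor L X0 X1 Y0 Y1 f0 f1))
    = comp L (pr0 L (Sob L Y0) (Sob L Y1)) (pmor L (Sob L X0) (Sob L X1) (Sob L Y0) (Sob L Y1) (Smor L f0) (Smor L f1))"
    by (metis S_comp[OF F pr0_hom] S_comp[OF pr0_hom f0] S_pr0 pr0_pmor[OF f0 f1] pr0_pmor[OF Sf0 Sf1])
  show "comp L (pr1 L (Sob L Y0) (Sob L Y1)) (Smor L (pmor L X0 X1 Y0 Y1 f0 f1))
    = comp L (pr1 L (Sob L Y0) (Sob L Y1)) (pmor L (Sob L X0) (Sob L X1) (Sob L Y0) (Sob L Y1) (Smor L f0) (Smor L f1))"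
    by (metis S_comp[OF F pr1_hom] S_comp[OF pr1_hom f1] S_pr1 pr1_pmor[OF f0 f1] pr1_pmor[OF Sf0 Sf1])
qed

lemma flip_prd:
  "flip L (prd L X0 X1) = pmor L (Sob L (Sob L X0)) (Sob L (Sob L X1))
     (Sob L (Sob L X0)) (Sob L (Sob L X1)) (flip L X0) (flip L X1)"
proof (rule prod_ext)
  show "flip L (prd L X0 X1)
    \<in> hom L (prd L (Sob L (Sob L X0)) (Sob L (Sob L X1))) (prd L (Sob L (Sob L X0)) (Sob L (Sob L X1)))"
    using flip_hom[of "prd L X0 X1"] by (simp add: S_prd)
  show "pmor L (Sob L (Sob L X0)) (Sob L (Sob L X1)) (Sob L (Sob L X0)) (Sob L (Sob L X1)) (flip L X0) (flip L X1)
    \<in> hom L (prd L (Sob L (Sob L X0)) (Sob L (Sob L X1))) (prd L (Sob L (Sob L X0)) (Sob L (Sob L X1)))"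
    by (rule pmor_hom[OF flip_hom flip_hom])
  show "comp L (pr0 L (Sob L (Sob L X0)) (Sob L (Sob L X1))) (flip L (prd L X0 X1))
    = comp L (pr0 L (Sob L (Sob L X0)) (Sob L (Sob L X1)))
        (pmor L (Sob L (Sob L X0)) (Sob L (Sob L X1)) (Sob L (Sob L X0)) (Sob L (Sob L X1)) (flip L X0) (flip L X1))"
    using flip_nat[OF pr0_hom[of X0 X1]] pr0_pmor[OF flip_hom flip_hom] by (simp add: S_pr0)
  show "comp L (pr1 L (Sob L (Sob L X0)) (Sob L (Sob L X1))) (flip L (prd L X0 X1))
    = comp L (pr1 L (Sob L (Sob L X0)) (Sob L (Sob L X1)))
        (pmor L (Sob L (Sob L X0)) (Sob L (Sob L X1)) (Sob L (Sob L X0)) (Sob L (Sob L X1)) (flip L X0) (flip L X1))"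
    using flip_nat[OF pr1_hom[of X0 X1]] pr1_pmor[OF flip_hom flip_hom] by (simp add: S_pr1)
qed

end

theorem mainTheorem3:
  assumes "summable_category_products L"
  shows "comp L (flip L (prd L X0 X1))
           (comp L (Smor L (psi0 L X0 X1)) (psi1 L (Sob L X0) X1))
         = comp L (Smor L (psi1 L X0 X1)) (psi0 L X0 (Sob L X1))"
proof -
  interpret summable_category_products L by (rule assms)
  have "comp L (Smor L (psi0 L X0 X1)) (psi1 L (Sob L X0) X1)
      = pmor L (Sob L X0) (Sob L X1) (Sob L (Sob L X0)) (Sob L (Sob L X1))
          (iota0 L (Sob L X0)) (Smor L (iota0 L X1))"
    unfolding psi0_def psi1_def
    by (simp add: Smor_pmor pmor_comp S_id id_hom iota0_hom S_hom id_left[OF iota0_hom] id_right[OF S_hom[OF iota0_hom]])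
  then have "comp L (flip L (prd L X0 X1)) (comp L (Smor L (psi0 L X0 X1)) (psi1 L (Sob L X0) X1))
      = pmor L (Sob L X0) (Sob L X1) (Sob L (Sob L X0)) (Sob L (Sob L X1))
          (Smor L (iota0 L X0)) (iota0 L (Sob L X1))"
    by (simp add: flip_prd pmor_comp iota0_hom S_hom flip_hom flip_iota0 flip_Smor_iota0)
  also have "\<dots> = comp L (Smor L (psi1 L X0 X1)) (psi0 L X0 (Sob L X1))"
    unfolding psi0_def psi1_def
    by (simp add: Smor_pmor pmor_comp S_id id_hom iota0_hom S_hom id_left[OF iota0_hom] id_right[OF S_hom[OF iota0_hom]])
  finally show ?thesis .
qed

end
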